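(* Let $\mathcal{P}$ be a probability distribution on $\mathbb{R}$ and let $X$ be a random variable with distribution $\mathcal{P}$. Define $g(p) := \inf\{r \in \mathbb{R} : \mathbb{P}(X \geq r) \leq p\}$ for $0<p<1$. Assume that $\mathbb{E}|X| < \infty$, that $g(p) \to \infty$ as $p \to 0^+$, and that $g$ is slowly varying at zero, i.e. $g(\lambda p)/g(p) \to 1$ as $p \to 0^+$ for every fixed $\lambda > 0$. For $n\in\mathbb{N}$ let $M_n = \max_{1\le i\le n} X_i$, where $X_1,\dots,X_n$ are i.i.d. with distribution $\mathcal{P}$. Then $$\mathbb{E} M_n \leq g(1/n)(1+o(1)) \quad \text{as } n\to\infty.$$ *)

theory Defs
  imports "HOL-Probability.Probability"
begin

definition upper_quantile :: "real measure \<Rightarrow> real \<Rightarrow> real" where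
  "upper_quantile P p = Inf {r. measure P {r..} \<le> p}"

end

theory Submission
  imports Defs
begin

(* For every level c, max_i X_i <= c + sum_i (X_i - c)^+, so E M_n <= c + n E (X - c)^+.  Take p = 1/n and c just above g(p), and slice the excess
   (X - c)^+ at the levels g(2^-k p), which X exceeds with probability at most 2^-k p;
   summation by parts turns this into E M_n <= sum_{k>=1} 2^-k g(2^-k p).  Slow variation
   gives the Potter-type bound g(2^-k p) <= (3/2)^k g(p) for small p, so by Tannery's
   theorem the sum divided by g(p) tends to sum_{k>=1} 2^-k = 1. *)

lemma upper_quantile_set_nonempty:
  assumes "real_distribution P" "0 < q"
  shows "{r. measure P {r..} \<le> q} \<noteq> {}"
proof -
  interpret real_distribution P by fact
  have "\<forall>\<^sub>F r in at_top. 1 - q < cdf P r"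
    using cdf_lim_at_top_prob assms(2) by (intro order_tendstoD) auto
  then obtain r where "1 - q < cdf P r"
    by (auto simp: eventually_at_top_linorder)
  moreover have "cdf P r \<le> measure P {..<r + 1}"
    unfolding cdf_def by (intro finite_measure_mono) auto
  moreover have "measure P {r + 1..} = 1 - measure P {..<r + 1}"
    using prob_compl[of "{..<r + 1}"] by (simp add: Compl_eq_Diff_UNIV[symmetric])
  ultimately show ?thesis by (intro ex_in_conv[THEN iffD1] exI[of _ "r + 1"]) simp
qed

lemma upper_quantile_set_bdd_below:
  assumes "real_distribution P" "q < 1"
  shows "bdd_below {r. measure P {r..} \<le> q}"
proof -
  interpret real_distribution P by fact
  have "\<forall>\<^sub>F r in at_bot. cdf P r < 1 - q"
    using cdf_lim_at_bot assms(2) by (intro order_tendstoD) auto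
  then obtain b where b: "\<And>r. r \<le> b \<Longrightarrow> cdf P r < 1 - q"
    by (auto simp: eventually_at_bot_linorder)
  show ?thesis
  proof (rule bdd_belowI)
    fix r assume "r \<in> {r. measure P {r..} \<le> q}"
    then have "1 - q \<le> measure P {..<r}"
      using prob_compl[of "{..<r}"] by (simp add: Compl_eq_Diff_UNIV[symmetric])
    also have "\<dots> \<le> cdf P r"
      unfolding cdf_def by (intro finite_measure_mono) auto
    finally show "b \<le> r" by (metis b linorder_le_cases not_le)
  qed
qed

lemma measure_atLeast_le_if_upper_quantile_less:
  assumes "real_distribution P" "0 < q" "upper_quantile P q < r"
  shows "measure P {r..} \<le> q"
proof -
  interpret real_distribution P by fact
  obtain a where a: "measure P {a..} \<le> q" "a < r"
    using cInf_lessD[OF upper_quantile_set_nonempty[OF assms(1,2)]] assms(3)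
    unfolding upper_quantile_def by blast
  have "measure P {r..} \<le> measure P {a..}"
    using a(2) by (intro finite_measure_mono) auto
  with a(1) show ?thesis by simp
qed

lemma upper_quantile_antimono:
  assumes "real_distribution P" "0 < q" "q \<le> q'" "q' < 1"
  shows "upper_quantile P q' \<le> upper_quantile P q"
  unfolding upper_quantile_def
  using assms upper_quantile_set_nonempty upper_quantile_set_bdd_below
  by (intro cInf_superset_mono) auto

lemma excess_le_sum_indicator:
  fixes h :: "nat \<Rightarrow> real"
  assumes "incseq h"
  shows "max 0 (min x (h N) - h 0) \<le> (\<Sum>k<N. (h (Suc k) - h k) * indicator {h k..} x)"
proof (induction N)
  case (Suc N)
  have "h 0 \<le> h N" "h N \<le> h (Suc N)"
    using assms by (auto simp: incseq_def)
  moreover define S where "S = (\<Sum>k<N. (h (Suc k) - h k) * indicator {h k..} x)"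
  ultimately show ?case
    using Suc.IH unfolding sum.lessThan_Suc S_def[symmetric]
    by (cases "h N \<le> x") (auto simp: indicator_def min_def max_def split: if_split_asm)
qed simp

lemma excess_le_suminf_indicator:
  fixes h :: "nat \<Rightarrow> real"
  assumes "incseq h" "filterlim h at_top sequentially"
  shows "ennreal (max 0 (x - h 0)) \<le> (\<Sum>k. ennreal (h (Suc k) - h k) * indicator {h k..} x)"
proof -
  have step_nonneg: "0 \<le> h (Suc k) - h k" for k
    using assms(1) by (simp add: incseq_Suc_iff)
  obtain N where "x < h N"
    using assms(2) by (auto simp: filterlim_at_top_dense eventually_sequentially)
  then have "ennreal (max 0 (x - h 0)) \<le> ennreal (\<Sum>k<N. (h (Suc k) - h k) * indicator {h k..} x)"
    using excess_le_sum_indicator[OF assms(1), of x N] by (intro ennreal_leI) simp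
  also have "\<dots> = (\<Sum>k<N. ennreal ((h (Suc k) - h k) * indicator {h k..} x))"
    using step_nonneg by (intro sum_ennreal[symmetric]) simp
  also have "\<dots> = (\<Sum>k<N. ennreal (h (Suc k) - h k) * indicator {h k..} x)"
    by (intro sum.cong) (auto simp: indicator_def)
  also have "\<dots> \<le> (\<Sum>k. ennreal (h (Suc k) - h k) * indicator {h k..} x)"
    by (intro sum_le_suminf) auto
  finally show ?thesis .
qed

lemma integral_excess_le_suminf:
  fixes h w :: "nat \<Rightarrow> real"
  assumes "real_distribution P" "incseq h" "filterlim h at_top sequentially"
    and tail: "\<And>k. measure P {h k..} \<le> w k"
    and summable: "summable (\<lambda>k. (h (Suc k) - h k) * w k)"
  shows "(\<integral>x. max 0 (x - h 0) \<partial>P) \<le> (\<Sum>k. (h (Suc k) - h k) * w k)"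
proof -
  interpret real_distribution P by fact
  have step_nonneg: "0 \<le> h (Suc k) - h k" for k
    using assms(2) by (simp add: incseq_Suc_iff)
  have w_nonneg: "0 \<le> w k" for k
    using tail[of k] measure_nonneg[of P "{h k..}"] by linarith
  have "(\<integral>\<^sup>+x. max 0 (x - h 0) \<partial>P)
      \<le> (\<integral>\<^sup>+x. (\<Sum>k. ennreal (h (Suc k) - h k) * indicator {h k..} x) \<partial>P)"
    by (intro nn_integral_mono excess_le_suminf_indicator assms(2,3))
  also have "\<dots> = (\<Sum>k. ennreal (h (Suc k) - h k) * emeasure P {h k..})"
    by (subst nn_integral_suminf) (auto simp: nn_integral_cmult_indicator)
  also have "\<dots> \<le> (\<Sum>k. ennreal ((h (Suc k) - h k) * w k))"
    using tail step_nonneg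
    by (intro suminf_le)
      (auto simp: emeasure_eq_measure ennreal_mult' intro!: mult_left_mono ennreal_leI)
  also have "\<dots> = ennreal (\<Sum>k. (h (Suc k) - h k) * w k)"
    using step_nonneg w_nonneg summable by (intro suminf_ennreal2) auto
  finally have "(\<integral>\<^sup>+x. max 0 (x - h 0) \<partial>P) \<le> ennreal (\<Sum>k. (h (Suc k) - h k) * w k)" .
  moreover have "0 \<le> (\<Sum>k. (h (Suc k) - h k) * w k)"
    using step_nonneg w_nonneg by (intro suminf_nonneg summable) auto
  ultimately show ?thesis
    by (subst integral_eq_nn_integral) (auto simp: enn2real_leI)
qed

lemma expectation_Max_le_excess:
  fixes X :: "'i \<Rightarrow> 'a \<Rightarrow> real"
  assumes "prob_space M" and [measurable]: "\<And>i. X i \<in> borel_measurable M"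
    and distr: "\<And>i. distr M borel (X i) = P" and "integrable P (\<lambda>x. x)"
    and "finite I" "I \<noteq> {}"
  shows "(\<integral>\<omega>. Max ((\<lambda>i. X i \<omega>) ` I) \<partial>M) \<le> c + card I * (\<integral>x. max 0 (x - c) \<partial>P)"
proof -
  interpret prob_space M by fact
  have integrable_X: "integrable M (X i)" for i
  proof -
    have "integrable (distr M borel (X i)) (\<lambda>x. x)"
      unfolding distr by fact
    then show ?thesis by (subst (asm) integrable_distr_eq) auto
  qed
  have excess_eq: "(\<integral>\<omega>. max 0 (X i \<omega> - c) \<partial>M) = (\<integral>x. max 0 (x - c) \<partial>P)" for i
    unfolding distr[of i, symmetric] by (rule integral_distr[symmetric]) auto
  have "(\<integral>\<omega>. Max ((\<lambda>i. X i \<omega>) ` I) \<partial>M) \<le> (\<integral>\<omega>. c + (\<Sum>i\<in>I. max 0 (X i \<omega> - c)) \<partial>M)"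
  proof (rule integral_mono)
    show "integrable M (\<lambda>\<omega>. Max ((\<lambda>i. X i \<omega>) ` I))"
      using assms(5,6) integrable_X by (intro integrable_MAX) auto
    show "integrable M (\<lambda>\<omega>. c + (\<Sum>i\<in>I. max 0 (X i \<omega> - c)))"
      using integrable_X by auto
    fix \<omega>
    have "Max ((\<lambda>i. X i \<omega>) ` I) \<in> (\<lambda>i. X i \<omega>) ` I"
      using assms(5,6) by (intro Max_in) auto
    then obtain j where j: "j \<in> I" "Max ((\<lambda>i. X i \<omega>) ` I) = X j \<omega>"
      by auto
    have "X j \<omega> \<le> c + max 0 (X j \<omega> - c)" by simp
    also have "\<dots> \<le> c + (\<Sum>i\<in>I. max 0 (X i \<omega> - c))"
      using j(1) assms(5) by (intro add_left_mono member_le_sum) auto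
    finally show "Max ((\<lambda>i. X i \<omega>) ` I) \<le> c + (\<Sum>i\<in>I. max 0 (X i \<omega> - c))"
      using j(2) by simp
  qed
  also have "\<dots> = c + card I * (\<integral>x. max 0 (x - c) \<partial>P)"
    using integrable_X by (simp add: integral_sum prob_space excess_eq)
  finally show ?thesis .
qed

lemma half_power_differences_sums:
  fixes G :: "nat \<Rightarrow> real"
  assumes "summable (\<lambda>k. (1/2)^k * G k)"
  shows "(\<lambda>k. (1/2)^k * (G (Suc k) - G k)) sums ((\<Sum>k. (1/2)^Suc k * G (Suc k)) - G 0)"
proof -
  define S where "S = (\<Sum>k. (1/2::real)^Suc k * G (Suc k))"
  have shifted: "(\<lambda>k. (1/2::real)^Suc k * G (Suc k)) sums S"
    using assms unfolding S_def by (subst (asm) summable_Suc_iff[symmetric]) (rule summable_sums)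
  then have "(\<lambda>k. (1/2::real)^k * G k) sums (S + G 0)"
    using sums_Suc_iff[of "\<lambda>k. (1/2::real)^k * G k" S] by (simp only: power_0 mult_1_left)
  from sums_diff[OF sums_mult[OF shifted, of 2] this] have diff: "(\<lambda>k. 2 * ((1/2::real)^Suc k * G (Suc k)) - (1/2)^k * G k)
      sums (2 * S - (S + G 0))" .
  have "(\<lambda>k. 2 * ((1/2::real)^Suc k * G (Suc k)) - (1/2)^k * G k) = (\<lambda>k. (1/2)^k * (G (Suc k) - G k))"
    by (simp add: fun_eq_iff right_diff_distrib)
  moreover have "2 * S - (S + G 0) = S - G 0"
    by simp
  ultimately show ?thesis
    using diff unfolding S_def[symmetric] by (simp only:)
qed

lemma expectation_Max_le_level_sum:
  fixes G :: "nat \<Rightarrow> real" and X :: "nat \<Rightarrow> 'a \<Rightarrow> real"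
  assumes P: "real_distribution P" and M: "prob_space M"
    and X: "\<And>i. X i \<in> borel_measurable M" and distr: "\<And>i. distr M borel (X i) = P"
    and integrable: "integrable P (\<lambda>x. x)"
    and "incseq G" "filterlim G at_top sequentially"
    and tail: "\<And>k r. G k < r \<Longrightarrow> measure P {r..} \<le> (1/2)^k / n"
    and summable: "summable (\<lambda>k. (1/2)^k * G k)"
    and n: "1 \<le> n"
  shows "(\<integral>\<omega>. Max ((\<lambda>i. X i \<omega>) ` {1..n}) \<partial>M) \<le> (\<Sum>k. (1/2)^Suc k * G (Suc k))"
proof (rule field_le_epsilon)
  define S where "S = (\<Sum>k. (1/2::real)^Suc k * G (Suc k))"
  fix \<eta> :: real
  assume "0 < \<eta>"
  \<comment> \<open>The tail bound holds only strictly above the levels, hence the shift by \<open>\<eta>\<close>.\<close>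
  define h where "h k = G k + \<eta>" for k
  have sums: "(\<lambda>k. (h (Suc k) - h k) * ((1/2)^k / n)) sums ((S - G 0) / n)"
    using sums_divide[OF half_power_differences_sums[OF summable], of n]
    by (simp add: h_def S_def mult.commute)
  have "incseq h"
    using \<open>incseq G\<close> by (simp add: h_def incseq_def)
  moreover have "filterlim h at_top sequentially"
    using filterlim_tendsto_add_at_top[OF tendsto_const[of \<eta>] \<open>filterlim G at_top sequentially\<close>]
    by (simp add: h_def[abs_def] add.commute)
  moreover have "measure P {h k..} \<le> (1/2)^k / n" for k
    using \<open>0 < \<eta>\<close> by (intro tail) (simp add: h_def)
  ultimately have "(\<integral>x. max 0 (x - h 0) \<partial>P) \<le> (\<Sum>k. (h (Suc k) - h k) * ((1/2)^k / n))"
    using sums_summable[OF sums] by (rule integral_excess_le_suminf[OF P])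
  also have "\<dots> = (S - G 0) / n"
    using sums by (rule sums_unique[symmetric])
  finally have excess: "(\<integral>x. max 0 (x - h 0) \<partial>P) \<le> (S - G 0) / n" .
  have "(\<integral>\<omega>. Max ((\<lambda>i. X i \<omega>) ` {1..n}) \<partial>M) \<le> h 0 + card {1..n} * (\<integral>x. max 0 (x - h 0) \<partial>P)"
    using n by (intro expectation_Max_le_excess[OF M X distr integrable]) auto
  also have "card {1..n} = n"
    by simp
  also have "h 0 + n * (\<integral>x. max 0 (x - h 0) \<partial>P) \<le> h 0 + n * ((S - G 0) / n)"
    using excess by (intro add_left_mono mult_left_mono) auto
  also have "\<dots> = S + \<eta>"
    using n by (simp add: h_def)
  finally show "(\<integral>\<omega>. Max ((\<lambda>i. X i \<omega>) ` {1..n}) \<partial>M) \<le> S + \<eta>" .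
qed

definition dyadic_mean :: "(real \<Rightarrow> real) \<Rightarrow> real \<Rightarrow> real" where
  "dyadic_mean g p = (\<Sum>k. (1/2)^Suc k * g ((1/2)^Suc k * p))"

lemma expectation_Max_le_dyadic_mean:
  fixes P :: "real measure" and X :: "nat \<Rightarrow> 'a \<Rightarrow> real"
  assumes P: "real_distribution P" and M: "prob_space M"
    and X: "\<And>i. X i \<in> borel_measurable M" and distr: "\<And>i. distr M borel (X i) = P"
    and integrable: "integrable P (\<lambda>x. x)"
    and g_infty: "filterlim (upper_quantile P) at_top (at_right 0)"
    and n: "2 \<le> n"
    and summable: "summable (\<lambda>k. (1/2)^k * upper_quantile P ((1/2)^k * (1 / real n)))"
  shows "(\<integral>\<omega>. Max ((\<lambda>i. X i \<omega>) ` {1..n}) \<partial>M) \<le> dyadic_mean (upper_quantile P) (1 / real n)"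
proof -
  define p where "p = 1 / real n"
  define G where "G k = upper_quantile P ((1/2)^k * p)" for k
  have p: "0 < p" "p < 1"
    using n by (auto simp: p_def)
  have q: "0 < (1/2::real)^k * p" "(1/2::real)^k * p < 1" for k
  proof -
    have "(1/2::real)^k * p \<le> p"
      using p by (intro mult_left_le_one_le) (auto simp: power_le_one)
    with p show "0 < (1/2::real)^k * p" "(1/2::real)^k * p < 1"
      by (simp, linarith)
  qed
  have "incseq G"
  proof (rule incseq_SucI)
    fix k
    show "G k \<le> G (Suc k)"
      unfolding G_def using p q by (intro upper_quantile_antimono[OF P]) auto
  qed
  moreover have "filterlim G at_top sequentially"
  proof -
    have "filterlim (\<lambda>k. (1/2::real)^k * p) (at_right 0) sequentially"
      using q(1) by (intro tendsto_imp_filterlim_at_right tendsto_mult_left_zero LIMSEQ_power_zero) auto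
    from filterlim_compose[OF g_infty this] show ?thesis
      unfolding G_def .
  qed
  moreover have "measure P {r..} \<le> (1/2)^k / n" if "G k < r" for k r
    using measure_atLeast_le_if_upper_quantile_less[OF P q(1) that[unfolded G_def]]
    by (simp add: p_def)
  moreover have "summable (\<lambda>k. (1/2)^k * G k)"
    using summable by (simp add: G_def p_def)
  ultimately have "(\<integral>\<omega>. Max ((\<lambda>i. X i \<omega>) ` {1..n}) \<partial>M) \<le> (\<Sum>k. (1/2)^Suc k * G (Suc k))"
    using n by (intro expectation_Max_le_level_sum[OF P M X distr integrable]) auto
  then show ?thesis
    by (simp add: dyadic_mean_def G_def p_def)
qed

lemma eventually_geometric_bound_at_right_0:
  fixes g :: "real \<Rightarrow> real" and l c :: real
  assumes pos: "\<forall>\<^sub>F p in at_right 0. 0 < g p" and l: "0 < l" "l \<le> 1" and c: "1 < c"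
    and ratio: "((\<lambda>p. g (l * p) / g p) \<longlongrightarrow> 1) (at_right 0)"
  shows "\<forall>\<^sub>F p in at_right 0. \<forall>k. 0 < g (l^k * p) \<and> g (l^k * p) \<le> c^k * g p"
proof -
  have "\<forall>\<^sub>F p in at_right 0. g (l * p) / g p < c"
    using ratio c by (rule order_tendstoD)
  with pos have "\<forall>\<^sub>F p in at_right 0. 0 < g p \<and> g (l * p) < c * g p"
    by eventually_elim (simp add: pos_divide_less_eq mult.commute)
  then obtain p0 :: real where "0 < p0"
    and p0: "\<And>p. 0 < p \<Longrightarrow> p < p0 \<Longrightarrow> 0 < g p \<and> g (l * p) < c * g p"
    unfolding eventually_at_right_field by auto
  have "0 < g (l^k * p) \<and> g (l^k * p) \<le> c^k * g p" if p: "0 < p" "p < p0" for p k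
  proof (induction k)
    case 0
    then show ?case using p0[OF p] by simp
  next
    case (Suc k)
    define q where "q = l^k * p"
    have "l^k * p \<le> p"
      using l p by (intro mult_left_le_one_le) (auto simp: power_le_one)
    then have q: "0 < q" "q < p0"
      using p l unfolding q_def by (simp, linarith)
    moreover have "l * q \<le> q"
      using l q by (intro mult_left_le_one_le) auto
    ultimately have lq: "0 < l * q" "l * q < p0"
      using l by (simp, linarith)
    have "g (l * q) < c * g q" using p0[OF q] by simp
    also have "\<dots> \<le> c * (c^k * g p)" using Suc.IH c by (simp add: q_def)
    finally have "g (l * q) \<le> c^Suc k * g p" by simp
    with p0[OF lq] show ?case by (simp add: q_def mult.assoc)
  qed
  with \<open>0 < p0\<close> show ?thesis
    unfolding eventually_at_right_field by auto
qed

lemma eventually_dyadic_terms_bound: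
  fixes g :: "real \<Rightarrow> real"
  assumes pos: "\<forall>\<^sub>F p in at_right 0. 0 < g p"
    and ratio: "((\<lambda>p. g ((1/2) * p) / g p) \<longlongrightarrow> 1) (at_right 0)"
  shows "\<forall>\<^sub>F p in at_right 0. \<forall>k. 0 \<le> (1/2)^k * g ((1/2)^k * p) \<and> (1/2)^k * g ((1/2)^k * p) \<le> (3/4)^k * g p"
proof -
  have "\<forall>\<^sub>F p in at_right 0. \<forall>k. 0 < g ((1/2)^k * p) \<and> g ((1/2)^k * p) \<le> (3/2)^k * g p"
    by (rule eventually_geometric_bound_at_right_0[OF pos _ _ _ ratio]) auto
  then show ?thesis
  proof eventually_elim
    case (elim p)
    show ?case
    proof
      fix k
      have "(1/2)^k * g ((1/2)^k * p) \<le> (1/2)^k * ((3/2)^k * g p)"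
        using elim by (intro mult_left_mono) auto
      also have "\<dots> = (3/4)^k * g p"
        by (simp add: power_mult_distrib[symmetric])
      finally show "0 \<le> (1/2)^k * g ((1/2)^k * p) \<and> (1/2)^k * g ((1/2)^k * p) \<le> (3/4)^k * g p"
        using elim by (simp add: less_imp_le)
    qed
  qed
qed

lemma eventually_summable_dyadic:
  fixes g :: "real \<Rightarrow> real"
  assumes pos: "\<forall>\<^sub>F p in at_right 0. 0 < g p"
    and ratio: "((\<lambda>p. g ((1/2) * p) / g p) \<longlongrightarrow> 1) (at_right 0)"
  shows "\<forall>\<^sub>F p in at_right 0. summable (\<lambda>k. (1/2)^k * g ((1/2)^k * p))"
  using eventually_dyadic_terms_bound[OF pos ratio]
proof eventually_elim
  case (elim p)
  have "summable (\<lambda>k. (3/4::real)^k * g p)"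
    by (intro summable_mult2 summable_geometric) simp
  then show ?case
    by (rule summable_comparison_test'[of _ 0]) (use elim in auto)
qed

lemma dyadic_mean_ratio_tendsto:
  fixes g :: "real \<Rightarrow> real"
  assumes pos: "\<forall>\<^sub>F p in at_right 0. 0 < g p"
    and slowly_varying: "\<And>l. 0 < l \<Longrightarrow> ((\<lambda>p. g (l * p) / g p) \<longlongrightarrow> 1) (at_right 0)"
  shows "((\<lambda>p. dyadic_mean g p / g p) \<longlongrightarrow> 1) (at_right 0)"
proof -
  have half: "((\<lambda>p. g ((1/2) * p) / g p) \<longlongrightarrow> 1) (at_right 0)"
    by (rule slowly_varying) simp
  define a where "a k p = (1/2)^Suc k * g ((1/2)^Suc k * p) / g p" for k p
  have lim: "((\<lambda>p. a k p) \<longlongrightarrow> (1/2)^Suc k) (at_right 0)" for k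
    using tendsto_mult_left[OF slowly_varying[of "(1/2)^Suc k"], of "(1/2)^Suc k"]
    by (simp add: a_def)
  have "\<forall>\<^sub>F p in at_right 0. \<forall>k. norm (a k p) \<le> (3/4)^Suc k"
    using eventually_dyadic_terms_bound[OF pos half] pos
    by eventually_elim (auto simp: a_def pos_divide_le_eq simp del: power_Suc)
  then have "\<forall>\<^sub>F (_ :: nat, p) in at_top \<times>\<^sub>F at_right 0. \<forall>k. norm (a k p) \<le> (3/4)^Suc k"
    by (subst eventually_prod2) simp_all
  then have bound: "\<forall>\<^sub>F (k, p) in at_top \<times>\<^sub>F at_right 0. norm (a k p) \<le> (3/4)^Suc k"
    by (rule eventually_mono) auto
  have "summable (\<lambda>k. (3/4::real)^Suc k)"
    by (subst summable_Suc_iff) (simp add: summable_geometric)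
  from tannerys_theorem[OF lim bound this]
  have "((\<lambda>p. \<Sum>k. a k p) \<longlongrightarrow> (\<Sum>k. (1/2)^Suc k)) (at_right 0)"
    by simp
  moreover have "(\<Sum>k. (1/2::real)^Suc k) = 1"
    using power_half_series by (rule sums_unique[symmetric])
  moreover have "\<forall>\<^sub>F p in at_right 0. (\<Sum>k. a k p) = dyadic_mean g p / g p"
    using eventually_summable_dyadic[OF pos half]
  proof eventually_elim
    case (elim p)
    then have "summable (\<lambda>k. (1/2)^Suc k * g ((1/2)^Suc k * p))"
      by (simp only: summable_Suc_iff[of "\<lambda>k. (1/2::real)^k * g ((1/2)^k * p)"])
    then show ?case
      unfolding a_def dyadic_mean_def by (rule suminf_divide)
  qed
  ultimately show ?thesis
    by (simp add: tendsto_cong)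
qed

theorem proposition3:
  fixes P :: "real measure" and M :: "'a measure" and X :: "nat \<Rightarrow> 'a \<Rightarrow> real"
  assumes P_prob: "prob_space P"
    and P_sets: "sets P = sets borel"
    and M_prob: "prob_space M"
    and indep: "prob_space.indep_vars M (\<lambda>_. borel) X UNIV"
    and distr: "\<And>i. distr M borel (X i) = P"
    and integrable: "integrable P (\<lambda>x. x)"
    and g_infty: "filterlim (upper_quantile P) at_top (at_right 0)"
    and slowly_varying: "\<And>l. l > 0 \<Longrightarrow>
        ((\<lambda>p. upper_quantile P (l * p) / upper_quantile P p) \<longlongrightarrow> 1) (at_right 0)"
  shows "\<exists>e :: nat \<Rightarrow> real. e \<longlonglongrightarrow> 0 \<and>
    (\<forall>\<^sub>F n in sequentially.
       integral\<^sup>L M (\<lambda>\<omega>. Max ((\<lambda>i. X i \<omega>) ` {1..n}))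
         \<le> upper_quantile P (1 / real n) * (1 + e n))"
proof -
  let ?g = "upper_quantile P"
  define e where "e n = dyadic_mean ?g (1 / real n) / ?g (1 / real n) - 1" for n
  have P: "real_distribution P"
    using P_prob P_sets by (simp add: real_distribution_def real_distribution_axioms_def)
  have X: "X i \<in> borel_measurable M" for i
    using indep by (simp add: prob_space.indep_vars_def[OF M_prob])
  have pos: "\<forall>\<^sub>F p in at_right 0. 0 < ?g p"
    using g_infty by (simp add: filterlim_at_top_dense)
  have half: "((\<lambda>p. ?g ((1/2) * p) / ?g p) \<longlongrightarrow> 1) (at_right 0)"
    by (rule slowly_varying) simp
  have inverse_n: "filterlim (\<lambda>n. 1 / real n) (at_right 0) sequentially"
    using filterlim_compose[OF filterlim_inverse_at_right_top filterlim_real_sequentially]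
    by (simp add: inverse_eq_divide)
  have "e \<longlonglongrightarrow> 1 - 1"
    unfolding e_def
    by (intro tendsto_diff tendsto_const filterlim_compose[OF dyadic_mean_ratio_tendsto inverse_n]
        pos slowly_varying)
  moreover have "\<forall>\<^sub>F n in sequentially. (\<integral>\<omega>. Max ((\<lambda>i. X i \<omega>) ` {1..n}) \<partial>M) \<le> ?g (1 / real n) * (1 + e n)"
    using eventually_compose_filterlim[OF eventually_summable_dyadic[OF pos half] inverse_n]
      eventually_compose_filterlim[OF pos inverse_n] eventually_ge_at_top[of 2]
  proof eventually_elim
    case (elim n)
    then show ?case
      using expectation_Max_le_dyadic_mean[OF P M_prob X distr integrable g_infty]
      by (simp add: e_def)
  qed
  ultimately show ?thesis
    by auto
qed

end
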